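(* (1-cut in MRL.) For every sequent $\Gamma$ and every formula $A$ of MRL: if $\Gamma, \emptyset{:}A$ is derivable in MRL, then $\Gamma$ is derivable in MRL.
   Context: Fix a nonempty set $\mathcal{R}$ (the set of roles). For $R\subseteq\mathcal{R}$ write $\overline{R}=\mathcal{R}\setminus R$. An ultrafilter $\mathcal{U}$ on $\mathcal{R}$ is a set of subsets of $\mathcal{R}$ such that $\mathcal{R}\in\mathcal{U}$; $R_1\in\mathcal{U}$ and $R_1\subseteq R_2$ imply $R_2\in\mathcal{U}$; $R_1,R_2\in\mathcal{U}$ imply $R_1\cap R_2\in\mathcal{U}$; and for every $R\subseteq\mathcal{R}$, $R\in\mathcal{U}$ or $\overline{R}\in\mathcal{U}$. An endomorphism is any function $f:\mathcal{R}\to\mathcal{R}$, and $f^{-1}(R)$ denotes the preimage of $R$. Fix a first-order language of terms $t$ with variables $x$, and a collection of primitive (atomic) formulas $a$ (which may contain terms). Formulas of MRL: $A ::= a \mid \neg_f(A) \mid A_1\wedge_{\mathcal{U}} A_2 \mid A\supset_{f,\mathcal{U}} B \mid \forall_{\mathcal{U}}(\lambda x.A)$, with $f$ an endomorphism and $\mathcal{U}$ an ultrafilter on $\mathcal{R}$; $x$ is bound in $\forall_{\mathcal{U}}(\lambda x.A)$, and $A[t/x]$ is capture-avoiding substitution. An i-formula is a pair $R{:}A$ with $R\subseteq\mathcal{R}$ and $A$ a formula; a sequent is a finite multiset of i-formulas, and comma denotes multiset union. Derivability in MRL is given by the rules (premises $\Rightarrow$ conclusion, $\Gamma,\Gamma_1,\Gamma_2$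 arbitrary sequents): (Id) $\Gamma, R_1{:}a,\ldots,R_n{:}a$ is derivable whenever $n\ge1$ and $R_1,\ldots,R_n$ are pairwise disjoint with union $\mathcal{R}$; (Weaken) $\Gamma,R{:}A,R{:}A \Rightarrow \Gamma,R{:}A$; ($\neg$) $\Gamma, f^{-1}(R){:}A \Rightarrow \Gamma, R{:}\neg_f(A)$; ($\wedge$-neg-l) if $R\notin\mathcal{U}$: $\Gamma,R{:}A\Rightarrow\Gamma,R{:}A\wedge_{\mathcal{U}}B$; ($\wedge$-neg-r) if $R\notin\mathcal{U}$: $\Gamma,R{:}B\Rightarrow\Gamma,R{:}A\wedge_{\mathcal{U}}B$; ($\wedge$-pos) if $R\in\mathcal{U}$: $(\Gamma,R{:}A;\ \Gamma,R{:}B)\Rightarrow\Gamma,R{:}A\wedge_{\mathcal{U}}B$; ($\supset$-neg) if $R\notin\mathcal{U}$: $\Gamma,f^{-1}(R){:}A,R{:}B\Rightarrow\Gamma,R{:}A\supset_{f,\mathcal{U}}B$; ($\supset$-pos) if $R\in\mathcal{U}$: $(\Gamma_1,f^{-1}(R){:}A;\ \Gamma_2,R{:}B)\Rightarrow\Gamma_1,\Gamma_2,R{:}A\supset_{f,\mathcal{U}}B$; ($\forall$-neg) if $R\notin\mathcal{U}$ and $t$ is a term: $\Gamma,R{:}A[t/x]\Rightarrow\Gamma,R{:}\forall_{\mathcal{U}}(\lambda x.A)$; ($\forall$-pos) if $R\in\mathcal{U}$ and $x$ has no free occurrence in $\Gamma$: $\Gamma,R{:}A\Rightarrow\Gamma,R{:}\forall_{\mathcal{U}}(\lambda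 x.A)$. A sequent is derivable in MRL if it is the conclusion of a finite derivation tree built from these rules. *)

theory Defs
  imports Main "HOL-Library.Multiset"
begin

(* Ultrafilters on the set of roles, exactly as in the paper (roles = UNIV :: 'r set). *)
definition is_ultrafilter :: "'r set set \<Rightarrow> bool" where
  "is_ultrafilter U \<longleftrightarrow>
     UNIV \<in> U
   \<and> (\<forall>R1 R2. R1 \<in> U \<and> R1 \<subseteq> R2 \<longrightarrow> R2 \<in> U)
   \<and> (\<forall>R1 R2. R1 \<in> U \<and> R2 \<in> U \<longrightarrow> R1 \<inter> R2 \<in> U)
   \<and> (\<forall>R. R \<in> U \<or> - R \<in> U)"

typedef 'r ufilter = "{U :: 'r set set. is_ultrafilter U}"
  by (rule exI[of _ UNIV]) (auto simp: is_ultrafilter_def)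

definition inU :: "'r set \<Rightarrow> 'r ufilter \<Rightarrow> bool" where
  "inU R U \<longleftrightarrow> R \<in> Rep_ufilter U"

(* First-order terms; variables are de Bruijn indices. *)
datatype 'f trm = Var nat | Fn 'f "'f trm list"

(* MRL formulas; Forall binds de Bruijn index 0 in its body. *)
datatype ('r, 'f, 'p) form =
    Atom 'p "'f trm list"
  | Neg "'r \<Rightarrow> 'r" "('r, 'f, 'p) form"
  | Conj "'r ufilter" "('r, 'f, 'p) form" "('r, 'f, 'p) form"
  | Imp "'r \<Rightarrow> 'r" "'r ufilter" "('r, 'f, 'p) form" "('r, 'f, 'p) form"
  | Forall "'r ufilter" "('r, 'f, 'p) form"

primrec lift_trm :: "nat \<Rightarrow> 'f trm \<Rightarrow> 'f trm" where
  "lift_trm k (Var i) = (if i < k then Var i else Var (Suc i))"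
| "lift_trm k (Fn f ts) = Fn f (map (lift_trm k) ts)"

primrec subst_trm :: "nat \<Rightarrow> 'f trm \<Rightarrow> 'f trm \<Rightarrow> 'f trm" where
  "subst_trm k t (Var i) = (if i < k then Var i else if i = k then t else Var (i - 1))"
| "subst_trm k t (Fn f ts) = Fn f (map (subst_trm k t) ts)"

primrec lift_form :: "nat \<Rightarrow> ('r, 'f, 'p) form \<Rightarrow> ('r, 'f, 'p) form" where
  "lift_form k (Atom p ts) = Atom p (map (lift_trm k) ts)"
| "lift_form k (Neg f A) = Neg f (lift_form k A)"
| "lift_form k (Conj U A B) = Conj U (lift_form k A) (lift_form k B)"
| "lift_form k (Imp f U A B) = Imp f U (lift_form k A) (lift_form k B)"
| "lift_form k (Forall U A) = Forall U (lift_form (Suc k) A)"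

primrec subst_form :: "nat \<Rightarrow> 'f trm \<Rightarrow> ('r, 'f, 'p) form \<Rightarrow> ('r, 'f, 'p) form" where
  "subst_form k t (Atom p ts) = Atom p (map (subst_trm k t) ts)"
| "subst_form k t (Neg f A) = Neg f (subst_form k t A)"
| "subst_form k t (Conj U A B) = Conj U (subst_form k t A) (subst_form k t B)"
| "subst_form k t (Imp f U A B) = Imp f U (subst_form k t A) (subst_form k t B)"
| "subst_form k t (Forall U A) = Forall U (subst_form (Suc k) (lift_trm 0 t) A)"

(* i-formulas R:A and sequents (finite multisets of i-formulas) *)
type_synonym ('r, 'f, 'p) iform = "'r set \<times> ('r, 'f, 'p) form"
type_synonym ('r, 'f, 'p) sequent = "('r, 'f, 'p) iform multiset"

definition lift_seq :: "('r, 'f, 'p) sequent \<Rightarrow> ('r, 'f, 'p) sequent" where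
  "lift_seq \<Gamma> = image_mset (\<lambda>(R, B). (R, lift_form 0 B)) \<Gamma>"

inductive mrl :: "('r, 'f, 'p) sequent \<Rightarrow> bool" where
  Id: "Rs \<noteq> [] \<Longrightarrow>
       (\<forall>i j. i < length Rs \<and> j < length Rs \<and> i \<noteq> j \<longrightarrow> Rs ! i \<inter> Rs ! j = {}) \<Longrightarrow>
       \<Union> (set Rs) = UNIV \<Longrightarrow>
       mrl (\<Gamma> + mset (map (\<lambda>R. (R, Atom p ts)) Rs))"
| Weaken: "mrl (\<Gamma> + {#(R, A), (R, A)#}) \<Longrightarrow> mrl (\<Gamma> + {#(R, A)#})"
| NegR: "mrl (add_mset (f -` R, A) \<Gamma>) \<Longrightarrow> mrl (add_mset (R, Neg f A) \<Gamma>)"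
| ConjNegL: "\<not> inU R U \<Longrightarrow> mrl (add_mset (R, A) \<Gamma>) \<Longrightarrow> mrl (add_mset (R, Conj U A B) \<Gamma>)"
| ConjNegR: "\<not> inU R U \<Longrightarrow> mrl (add_mset (R, B) \<Gamma>) \<Longrightarrow> mrl (add_mset (R, Conj U A B) \<Gamma>)"
| ConjPos: "inU R U \<Longrightarrow> mrl (add_mset (R, A) \<Gamma>) \<Longrightarrow> mrl (add_mset (R, B) \<Gamma>) \<Longrightarrow>
            mrl (add_mset (R, Conj U A B) \<Gamma>)"
| ImpNeg: "\<not> inU R U \<Longrightarrow> mrl (\<Gamma> + {#(f -` R, A), (R, B)#}) \<Longrightarrow>
           mrl (add_mset (R, Imp f U A B) \<Gamma>)"
| ImpPos: "inU R U \<Longrightarrow> mrl (add_mset (f -` R, A) \<Gamma>1) \<Longrightarrow> mrl (add_mset (R, B) \<Gamma>2) \<Longrightarrow>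
           mrl (add_mset (R, Imp f U A B) (\<Gamma>1 + \<Gamma>2))"
| AllNeg: "\<not> inU R U \<Longrightarrow> mrl (add_mset (R, subst_form 0 t A) \<Gamma>) \<Longrightarrow>
           mrl (add_mset (R, Forall U A) \<Gamma>)"
| AllPos: "inU R U \<Longrightarrow> mrl (add_mset (R, A) (lift_seq \<Gamma>)) \<Longrightarrow>
           mrl (add_mset (R, Forall U A) \<Gamma>)"

end

theory Submission
  imports Defs
begin

text \<open>
  An i-formula labelled by the empty set of roles is inert: erasing every such i-formula from
  every sequent of a derivation leaves a derivation, up to weakening. The only rule where a
  premise has a genuinely different context is \<open>\<forall>\<close>-pos, whose premise context is
  the lifted one; since derivability is closed under substitution, instantiating the fresh
  variable by index 0 undoes the lifting. The cut formula \<open>{}:A\<close> is thus simply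
  erased, and the rest of the conclusion is restored by weakening.
\<close>

lemma mrl_weaken: "mrl \<Gamma> \<Longrightarrow> mrl (\<Gamma> + \<Delta>)"
proof (induction arbitrary: \<Delta> rule: mrl.induct)
  case (Id Rs \<Gamma> p ts)
  have "mrl ((\<Gamma> + \<Delta>) + mset (map (\<lambda>R. (R, Atom p ts)) Rs))"
    using Id by (rule mrl.Id)
  then show ?case by (simp add: ac_simps)
next
  case (Weaken \<Gamma> R A)
  then show ?case using mrl.Weaken[of "\<Gamma> + \<Delta>"] by (simp add: ac_simps)
next
  case (ImpNeg R U \<Gamma> f A B)
  then show ?case using mrl.ImpNeg[of R U "\<Gamma> + \<Delta>"] by (simp add: ac_simps)
next
  case (ImpPos R U f A \<Gamma>1 B \<Gamma>2)
  then show ?case using mrl.ImpPos[of R U f A "\<Gamma>1 + \<Delta>" B \<Gamma>2] by (simp add: ac_simps)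
next
  case (AllPos R U A \<Gamma>)
  then show ?case using mrl.AllPos[of R U A "\<Gamma> + \<Delta>"] by (simp add: lift_seq_def)
qed (auto intro: mrl.intros)

lemma mrl_contract: "mrl (add_mset x (add_mset x \<Gamma>)) \<Longrightarrow> mrl (add_mset x \<Gamma>)"
  using mrl.Weaken[of \<Gamma> "fst x" "snd x"] by simp

primrec psubst_trm :: "(nat \<Rightarrow> 'f trm) \<Rightarrow> 'f trm \<Rightarrow> 'f trm" where
  "psubst_trm \<sigma> (Var i) = \<sigma> i"
| "psubst_trm \<sigma> (Fn f ts) = Fn f (map (psubst_trm \<sigma>) ts)"

definition up_subst :: "(nat \<Rightarrow> 'f trm) \<Rightarrow> nat \<Rightarrow> 'f trm" where
  "up_subst \<sigma> i = (case i of 0 \<Rightarrow> Var 0 | Suc j \<Rightarrow> lift_trm 0 (\<sigma> j))"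

primrec psubst_form :: "(nat \<Rightarrow> 'f trm) \<Rightarrow> ('r, 'f, 'p) form \<Rightarrow> ('r, 'f, 'p) form" where
  "psubst_form \<sigma> (Atom p ts) = Atom p (map (psubst_trm \<sigma>) ts)"
| "psubst_form \<sigma> (Neg f A) = Neg f (psubst_form \<sigma> A)"
| "psubst_form \<sigma> (Conj U A B) = Conj U (psubst_form \<sigma> A) (psubst_form \<sigma> B)"
| "psubst_form \<sigma> (Imp f U A B) = Imp f U (psubst_form \<sigma> A) (psubst_form \<sigma> B)"
| "psubst_form \<sigma> (Forall U A) = Forall U (psubst_form (up_subst \<sigma>) A)"

definition lift_subst :: "nat \<Rightarrow> nat \<Rightarrow> 'f trm" where
  "lift_subst k i = (if i < k then Var i else Var (Suc i))"

definition single_subst :: "nat \<Rightarrow> 'f trm \<Rightarrow> nat \<Rightarrow> 'f trm" where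
  "single_subst k t i = (if i < k then Var i else if i = k then t else Var (i - 1))"

lemma psubst_trm_psubst_trm:
  "psubst_trm \<sigma> (psubst_trm \<tau> s) = psubst_trm (\<lambda>i. psubst_trm \<sigma> (\<tau> i)) s"
  by (induction s) auto

lemma psubst_trm_Var: "psubst_trm Var s = s"
  by (induction s) (auto simp: map_idI)

lemma lift_trm_eq_psubst: "lift_trm k s = psubst_trm (lift_subst k) s"
  by (induction s) (auto simp: lift_subst_def)

lemma subst_trm_eq_psubst: "subst_trm k t s = psubst_trm (single_subst k t) s"
  by (induction s) (auto simp: single_subst_def)

lemma up_lift_subst: "up_subst (lift_subst k) = lift_subst (Suc k)"
  by (auto simp: up_subst_def lift_subst_def split: nat.splits)

lemma up_single_subst: "up_subst (single_subst k t) = single_subst (Suc k) (lift_trm 0 t)"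
  by (auto simp: up_subst_def single_subst_def split: nat.splits)

lemma lift_form_eq_psubst: "lift_form k B = psubst_form (lift_subst k) B"
  by (induction B arbitrary: k) (auto simp: lift_trm_eq_psubst up_lift_subst)

lemma subst_form_eq_psubst: "subst_form k t B = psubst_form (single_subst k t) B"
  by (induction B arbitrary: k t) (auto simp: subst_trm_eq_psubst up_single_subst)

lemma psubst_trm_up_lift: "psubst_trm (up_subst \<sigma>) (lift_trm 0 s) = lift_trm 0 (psubst_trm \<sigma> s)"
  by (simp add: lift_trm_eq_psubst psubst_trm_psubst_trm lift_subst_def up_subst_def)

lemma up_subst_comp:
  "up_subst (\<lambda>i. psubst_trm \<sigma> (\<tau> i)) = (\<lambda>i. psubst_trm (up_subst \<sigma>) (up_subst \<tau> i))"
  by (auto simp: up_subst_def psubst_trm_up_lift split: nat.splits)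

lemma psubst_form_psubst_form:
  "psubst_form \<sigma> (psubst_form \<tau> B) = psubst_form (\<lambda>i. psubst_trm \<sigma> (\<tau> i)) B"
  by (induction B arbitrary: \<sigma> \<tau>) (auto simp: psubst_trm_psubst_trm up_subst_comp)

lemma psubst_form_up_lift:
  "psubst_form (up_subst \<sigma>) (lift_form 0 B) = lift_form 0 (psubst_form \<sigma> B)"
  by (simp add: lift_form_eq_psubst psubst_form_psubst_form flip: lift_trm_eq_psubst)
    (simp add: lift_subst_def up_subst_def)

lemma psubst_form_subst_form:
  "psubst_form \<sigma> (subst_form 0 t A)
     = subst_form 0 (psubst_trm \<sigma> t) (psubst_form (up_subst \<sigma>) A)"
  unfolding subst_form_eq_psubst psubst_form_psubst_form
  by (rule arg_cong[where f = "\<lambda>\<rho>. psubst_form \<rho> A"])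
    (auto simp: single_subst_def up_subst_def lift_trm_eq_psubst psubst_trm_psubst_trm
       lift_subst_def psubst_trm_Var split: nat.splits)

lemma subst_trm_Var_lift_trm: "subst_trm k (Var k) (lift_trm k s) = s"
  by (induction s) (auto simp: map_idI)

lemma subst_form_Var_lift_form: "subst_form k (Var k) (lift_form k B) = B"
  by (induction B arbitrary: k) (auto simp: subst_trm_Var_lift_trm map_idI)

definition psubst_seq :: "(nat \<Rightarrow> 'f trm) \<Rightarrow> ('r, 'f, 'p) sequent \<Rightarrow> ('r, 'f, 'p) sequent" where
  "psubst_seq \<sigma> \<Gamma> = image_mset (\<lambda>(R, B). (R, psubst_form \<sigma> B)) \<Gamma>"

lemma psubst_seq_add_mset [simp]:
  "psubst_seq \<sigma> (add_mset (R, B) \<Gamma>) = add_mset (R, psubst_form \<sigma> B) (psubst_seq \<sigma> \<Gamma>)"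
  by (simp add: psubst_seq_def)

lemma psubst_seq_union [simp]: "psubst_seq \<sigma> (\<Gamma> + \<Delta>) = psubst_seq \<sigma> \<Gamma> + psubst_seq \<sigma> \<Delta>"
  by (simp add: psubst_seq_def)

lemma psubst_seq_lift_seq: "psubst_seq (up_subst \<sigma>) (lift_seq \<Gamma>) = lift_seq (psubst_seq \<sigma> \<Gamma>)"
  by (induction \<Gamma>) (auto simp: psubst_seq_def lift_seq_def psubst_form_up_lift)

lemma mrl_psubst_seq: "mrl \<Gamma> \<Longrightarrow> mrl (psubst_seq \<sigma> \<Gamma>)"
proof (induction arbitrary: \<sigma> rule: mrl.induct)
  case (Id Rs \<Gamma> p ts)
  have "mrl (psubst_seq \<sigma> \<Gamma> + mset (map (\<lambda>R. (R, Atom p (map (psubst_trm \<sigma>) ts))) Rs))"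
    using Id by (rule mrl.Id)
  then show ?case by (simp add: psubst_seq_def multiset.map_comp comp_def)
next
  case (AllNeg R U t A \<Gamma>)
  then show ?case
    using mrl.AllNeg[OF AllNeg(1), of "psubst_trm \<sigma> t" "psubst_form (up_subst \<sigma>) A"]
    by (simp add: psubst_form_subst_form)
next
  case (AllPos R U A \<Gamma>)
  then show ?case
    using mrl.AllPos[OF AllPos(1)] AllPos.IH[of "up_subst \<sigma>"]
    by (simp add: psubst_seq_lift_seq)
qed (auto intro: mrl.intros mrl_contract)

lemma mrl_lift_seqD:
  assumes "mrl (lift_seq \<Gamma>)"
  shows "mrl \<Gamma>"
proof -
  have "psubst_seq (single_subst 0 (Var 0)) (lift_seq \<Gamma>) = \<Gamma>"
    by (induction \<Gamma>) (auto simp: psubst_seq_def lift_seq_def subst_form_Var_lift_form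
        simp flip: subst_form_eq_psubst)
  with mrl_psubst_seq[OF assms] show ?thesis
    by metis
qed

definition nonempty_part :: "('r, 'f, 'p) sequent \<Rightarrow> ('r, 'f, 'p) sequent" where
  "nonempty_part \<Gamma> = filter_mset (\<lambda>x. fst x \<noteq> {}) \<Gamma>"

lemma nonempty_part_simps [simp]:
  "nonempty_part {#} = {#}"
  "nonempty_part (add_mset ({}, A) \<Gamma>) = nonempty_part \<Gamma>"
  "R \<noteq> {} \<Longrightarrow> nonempty_part (add_mset (R, A) \<Gamma>) = add_mset (R, A) (nonempty_part \<Gamma>)"
  "nonempty_part (\<Gamma> + \<Delta>) = nonempty_part \<Gamma> + nonempty_part \<Delta>"
  by (simp_all add: nonempty_part_def)

lemma nonempty_part_lift_seq: "nonempty_part (lift_seq \<Gamma>) = lift_seq (nonempty_part \<Gamma>)"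
  by (induction \<Gamma>) (auto simp: lift_seq_def nonempty_part_def)

lemma mrl_from_nonempty_part: "mrl (\<Gamma> + nonempty_part \<Delta>) \<Longrightarrow> mrl (\<Gamma> + \<Delta>)"
  using mrl_weaken[of "\<Gamma> + nonempty_part \<Delta>" "filter_mset (\<lambda>x. fst x = {}) \<Delta>"]
  by (simp add: nonempty_part_def add.assoc flip: multiset_partition)

lemma mrl_nonempty_part_add_mset:
  "mrl (nonempty_part (add_mset x \<Gamma>)) \<Longrightarrow> mrl (add_mset x (nonempty_part \<Gamma>))"
  using mrl_from_nonempty_part[of "nonempty_part \<Gamma>" "{#x#}"]
  by (simp add: nonempty_part_def split: if_splits)

lemma pairwise_disjoint_nth_iff_sorted_wrt:
  "(\<forall>i j. i < length Rs \<and> j < length Rs \<and> i \<noteq> j \<longrightarrow> Rs ! i \<inter> Rs ! j = {})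
     \<longleftrightarrow> sorted_wrt (\<lambda>A B. A \<inter> B = {}) Rs"
proof
  assume "sorted_wrt (\<lambda>A B. A \<inter> B = {}) Rs"
  then have "i < j \<Longrightarrow> j < length Rs \<Longrightarrow> Rs ! i \<inter> Rs ! j = {}" for i j
    by (simp add: sorted_wrt_iff_nth_less)
  then show "\<forall>i j. i < length Rs \<and> j < length Rs \<and> i \<noteq> j \<longrightarrow> Rs ! i \<inter> Rs ! j = {}"
    by (metis Int_commute linorder_neqE_nat)
qed (auto simp: sorted_wrt_iff_nth_less)

lemma mrl_nonempty_part: "mrl \<Gamma> \<Longrightarrow> mrl (nonempty_part \<Gamma>)"
proof (induction rule: mrl.induct)
  case (Id Rs \<Gamma> p ts)
  let ?Rs = "filter (\<lambda>R. R \<noteq> {}) Rs"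
  have "\<Union> (set ?Rs) = UNIV"
    using Id(3) by auto
  moreover from this have "?Rs \<noteq> []"
    by (metis Union_empty empty_set empty_not_UNIV)
  moreover have "\<forall>i j. i < length ?Rs \<and> j < length ?Rs \<and> i \<noteq> j \<longrightarrow> ?Rs ! i \<inter> ?Rs ! j = {}"
    using Id(2) by (simp add: pairwise_disjoint_nth_iff_sorted_wrt sorted_wrt_filter)
  ultimately have "mrl (nonempty_part \<Gamma> + mset (map (\<lambda>R. (R, Atom p ts)) ?Rs))"
    by (intro mrl.Id)
  moreover have "nonempty_part (mset (map (\<lambda>R. (R, Atom p ts)) Rs))
      = mset (map (\<lambda>R. (R, Atom p ts)) ?Rs)"
    by (induction Rs) auto
  ultimately show ?case
    by simp
next
  case (Weaken \<Gamma> R A)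
  then show ?case by (cases "R = {}") (auto intro: mrl_contract)
next
  case (NegR f R A \<Gamma>)
  then show ?case by (cases "R = {}") (auto intro: mrl.NegR dest: mrl_nonempty_part_add_mset)
next
  case (ConjNegL R U A \<Gamma> B)
  then show ?case by (cases "R = {}") (auto intro: mrl.ConjNegL)
next
  case (ConjNegR R U B \<Gamma> A)
  then show ?case by (cases "R = {}") (auto intro: mrl.ConjNegR)
next
  case (ConjPos R U A \<Gamma> B)
  then show ?case by (cases "R = {}") (auto intro: mrl.ConjPos)
next
  case (ImpNeg R U \<Gamma> f A B)
  show ?case
  proof (cases "R = {}")
    case False
    then have "mrl (nonempty_part \<Gamma> + {#(f -` R, A), (R, B)#})"
      using ImpNeg.IH mrl_from_nonempty_part[of "nonempty_part \<Gamma>" "{#(f -` R, A), (R, B)#}"]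
      by (simp only: nonempty_part_simps(4))
    with False show ?thesis by (simp add: mrl.ImpNeg[OF ImpNeg(1)])
  qed (use ImpNeg.IH in simp)
next
  case (ImpPos R U f A \<Gamma>1 B \<Gamma>2)
  then show ?case
    by (cases "R = {}") (auto intro: mrl.ImpPos mrl_weaken dest: mrl_nonempty_part_add_mset)
next
  case (AllNeg R U t A \<Gamma>)
  then show ?case by (cases "R = {}") (auto intro: mrl.AllNeg)
next
  case (AllPos R U A \<Gamma>)
  then show ?case
    by (cases "R = {}") (auto simp: nonempty_part_lift_seq intro: mrl.AllPos dest: mrl_lift_seqD)
qed

theorem mainTheorem3:
  fixes \<Gamma> :: "('r, 'f, 'p) sequent" and A :: "('r, 'f, 'p) form"
  assumes "mrl (add_mset ({}, A) \<Gamma>)"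
  shows "mrl \<Gamma>"
proof -
  have "mrl (nonempty_part \<Gamma>)"
    using mrl_nonempty_part[OF assms] by simp
  then show ?thesis
    using mrl_from_nonempty_part[of "{#}" \<Gamma>] by simp
qed

end
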